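(* Let $\mathcal P$ be a 2-reflex orthostack made of three bricks with canonical contact rectangles, whose signature is neither of the form $\sqcap_i\sqcap_4$ nor of the form $\sqcup_4\sqcup_i$ ($i\in\{1,2,3,4\}$). Then $\mathcal P$ is guarded by one closed face guard that is neither the topmost nor the bottommost horizontal face of $\mathcal P$.
   Context: A 2-reflex orthostack is an orthogonal polyhedron with no reflex edge parallel to the vertical ($z$) axis all of whose horizontal cross-sections are simply connected; it is a stack of bricks $B_t=R_t\times[z_{t-1},z_t]$, $t=1,\dots,k$ (bottom to top), $z_0<\dots<z_k$, each $R_t$ an axis-parallel rectangle, $R_t\ne R_{t+1}$. The contact rectangle between $B_t$ and $B_{t+1}$ is $(R_t\cap R_{t+1})\times\{z_t\}$; it is canonical if one of $R_t,R_{t+1}$ is strictly contained in the other and their set difference is connected. The type of a canonical contact rectangle is the number $i\in\{1,2,3,4\}$ of sides of the smaller rectangle not contained in the boundary of the larger one. The contact is denoted $\sqcup_i$ if $R_t\subsetneq R_{t+1}$ and $\sqcap_i$ if $R_{t+1}\subsetneq R_t$. The signature is the sequence of these symbols for $t=1,\dots,k-1$, read bottom to top. A point $x$ is visible to $y$ if segment $xy$ does not meet the exterior of the polyhedron; a closed face guard is a face including its boundary; it guards the polyhedron if every point is visible from some point of it. *)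

theory Defs
  imports "HOL-Analysis.Analysis"
begin

type_synonym point3 = "real \<times> real \<times> real"

type_synonym rectc = "real \<times> real \<times> real \<times> real"

definition rset :: "rectc \<Rightarrow> (real \<times> real) set" where
  "rset r = (case r of (x1, x2, y1, y2) \<Rightarrow> {x1..x2} \<times> {y1..y2})"

definition nondeg :: "rectc \<Rightarrow> bool" where
  "nondeg r = (case r of (x1, x2, y1, y2) \<Rightarrow> x1 < x2 \<and> y1 < y2)"

definition side :: "rectc \<Rightarrow> nat \<Rightarrow> (real \<times> real) set" where
  "side r i = (case r of (x1, x2, y1, y2) \<Rightarrow>
     (if i = 0 then {x1} \<times> {y1..y2}
      else if i = 1 then {x2} \<times> {y1..y2}
      else if i = 2 then {x1..x2} \<times> {y1}
      else {x1..x2} \<times> {y2}))"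

definition canonical :: "rectc \<Rightarrow> rectc \<Rightarrow> bool" where
  "canonical r s =
     ((rset r \<subset> rset s \<and> connected (rset s - rset r)) \<or>
      (rset s \<subset> rset r \<and> connected (rset r - rset s)))"

definition ctype :: "rectc \<Rightarrow> rectc \<Rightarrow> nat" where
  "ctype small big = card {i \<in> {0..3::nat}. \<not> side small i \<subseteq> frontier (rset big)}"

datatype contact = Cup nat | Cap nat

text \<open>Contact symbol between lower rectangle r and upper rectangle s.\<close>
definition contact_sym :: "rectc \<Rightarrow> rectc \<Rightarrow> contact" where
  "contact_sym r s = (if rset r \<subset> rset s then Cup (ctype r s) else Cap (ctype s r))"

definition brick :: "rectc \<Rightarrow> real \<Rightarrow> real \<Rightarrow> point3 set" where
  "brick r a b = {(x, y, z). (x, y) \<in> rset r \<and> z \<in> {a..b}}"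

definition coord :: "nat \<Rightarrow> point3 \<Rightarrow> real" where
  "coord k p = (if k = 0 then fst p else if k = 1 then fst (snd p) else snd (snd p))"

definition flat_points :: "point3 set \<Rightarrow> point3 set" where
  "flat_points P = {p \<in> frontier P. \<exists>e>0. \<exists>k<3.
      ball p e \<inter> frontier P = ball p e \<inter> {q. coord k q = coord k p}}"

definition is_face :: "point3 set \<Rightarrow> point3 set \<Rightarrow> bool" where
  "is_face P F = (\<exists>C \<in> components (flat_points P). F = closure C)"

definition visible :: "point3 set \<Rightarrow> point3 \<Rightarrow> point3 \<Rightarrow> bool" where
  "visible P x y = (closed_segment x y \<subseteq> P)"

definition guards :: "point3 set \<Rightarrow> point3 set \<Rightarrow> bool" where
  "guards P F = (\<forall>p \<in> P. \<exists>q \<in> F. visible P q p)"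

end

theory Submission
  imports Defs
begin

text \<open>
  A three-brick orthostack P = B1 \<union> B2 \<union> B3 with canonical contacts and admissible signature
  is guarded by a closed face lying on the boundary of the middle brick B2.  The face is
  obtained as the closure of the connected component of the flat part of the boundary that
  contains a connected set S of relative-interior points of one facet of B2 avoiding B1 and B3;
  near such points P coincides with B2, hence with a half-space.  Every point of P is then seen
  from the closure of S because each brick lies in a convex subset of P meeting that closure.
\<close>

lemma frontier_local:
  assumes "open U" and "U \<inter> A = U \<inter> B"
  shows "U \<inter> frontier A = U \<inter> frontier B"
proof -
  have closure_local: "U \<inter> closure X = U \<inter> closure (U \<inter> X)" for X :: "'a set"
    using open_Int_closure_subset[OF assms(1), of X] closure_mono[of "U \<inter> X" X] by blast
  have interior_local: "U \<inter> interior X = interior (U \<inter> X)" for X :: "'a set"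
    by (simp add: interior_Int interior_open assms(1))
  have "U \<inter> frontier X = U \<inter> closure (U \<inter> X) - interior (U \<inter> X)" for X :: "'a set"
    unfolding frontier_def using closure_local[of X] interior_local[of X] by blast
  then show ?thesis using assms(2) by metis
qed

definition basis3 :: "nat \<Rightarrow> point3" where
  "basis3 k = (if k = 0 then (1, 0, 0) else if k = 1 then (0, 1, 0) else (0, 0, 1))"

lemma coord_inner: "coord k q = basis3 k \<bullet> q"
  by (cases q) (auto simp: coord_def basis3_def inner_Pair)

lemma continuous_on_coord [continuous_intros]: "continuous_on A (coord k)"
  unfolding coord_inner[abs_def] by (intro continuous_intros)

lemma frontier_coord_halfspaces:
  "frontier {q. coord k q \<le> c} = {q. coord k q = c}"
  "frontier {q. coord k q \<ge> c} = {q. coord k q = c}"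
proof -
  have "basis3 k \<noteq> 0" by (auto simp: basis3_def zero_prod_def)
  then show "frontier {q. coord k q \<le> c} = {q. coord k q = c}"
    "frontier {q. coord k q \<ge> c} = {q. coord k q = c}"
    unfolding coord_inner by (simp_all add: frontier_halfspace_le frontier_halfspace_ge)
qed

lemma all_less_3: "(\<forall>k<3. Q k) \<longleftrightarrow> Q 0 \<and> Q 1 \<and> Q (2::nat)"
  by (auto simp: numeral_3_eq_3 numeral_2_eq_2 less_Suc_eq)

lemma ex_less_3: "(\<exists>k<3. Q k) \<longleftrightarrow> Q 0 \<or> Q 1 \<or> Q (2::nat)"
  by (auto simp: numeral_3_eq_3 numeral_2_eq_2 less_Suc_eq)

lemma mem_cbox_coord:
  "q \<in> cbox a b \<longleftrightarrow> (\<forall>k<3. coord k a \<le> coord k q \<and> coord k q \<le> coord k b)"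
  by (cases a, cases b, cases q) (auto simp: all_less_3 coord_def cbox_Pair_iff)

lemma brick_cbox: "brick (a, b, c, d) l h = cbox (a, c, l) (b, d, h)"
  by (auto simp: brick_def rset_def cbox_Pair_eq)

lemma flat_pointI:
  assumes "open U" "p \<in> U" "k < 3" "U \<inter> P = U \<inter> H"
    and "frontier H = {q. coord k q = coord k p}"
  shows "p \<in> flat_points P"
proof -
  obtain e where e: "e > 0" "ball p e \<subseteq> U" by (rule openE[OF assms(1,2)])
  have "U \<inter> frontier P = U \<inter> {q. coord k q = coord k p}"
    using frontier_local[OF assms(1,4)] assms(5) by simp
  moreover have "ball p e \<inter> X = ball p e \<inter> (U \<inter> X)" for X using e(2) by auto
  ultimately have local: "ball p e \<inter> frontier P = ball p e \<inter> {q. coord k q = coord k p}"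
    by metis
  have "p \<in> ball p e \<inter> {q. coord k q = coord k p}" using e(1) by simp
  then have "p \<in> frontier P" unfolding local[symmetric] by (rule IntD2)
  moreover have "\<exists>e>0. \<exists>k<3. ball p e \<inter> frontier P = ball p e \<inter> {q. coord k q = coord k p}"
    using e(1) assms(3) local by blast
  ultimately show ?thesis unfolding flat_points_def by simp
qed

definition facet_interior :: "point3 \<Rightarrow> point3 \<Rightarrow> point3 set" where
  "facet_interior a b = {p. \<exists>k<3. (coord k p = coord k a \<or> coord k p = coord k b) \<and>
      (\<forall>j<3. j \<noteq> k \<longrightarrow> coord j a < coord j p \<and> coord j p < coord j b)}"

lemma facet_interior_iff:
  "(x, y, t) \<in> facet_interior (a, c, l) (b, d, h) \<longleftrightarrow>
     (x = a \<or> x = b) \<and> c < y \<and> y < d \<and> l < t \<and> t < h \<or>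
     (y = c \<or> y = d) \<and> a < x \<and> x < b \<and> l < t \<and> t < h \<or>
     (t = l \<or> t = h) \<and> a < x \<and> x < b \<and> c < y \<and> y < d"
  unfolding facet_interior_def ex_less_3 all_less_3 by (simp add: coord_def)

lemma facet_interior_subset_cbox:
  assumes "\<forall>k<3. coord k a < coord k b"
  shows "facet_interior a b \<subseteq> cbox a b"
proof
  fix p assume "p \<in> facet_interior a b"
  then obtain k where k: "k < 3" "coord k p = coord k a \<or> coord k p = coord k b"
    and inside: "\<forall>j<3. j \<noteq> k \<longrightarrow> coord j a < coord j p \<and> coord j p < coord j b"
    unfolding facet_interior_def by blast
  have "coord j a \<le> coord j p \<and> coord j p \<le> coord j b" if "j < 3" for j
  proof (cases "j = k")
    case True
    then show ?thesis using k assms[rule_format, OF k(1)] by auto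
  next
    case False
    then show ?thesis using inside that by (simp add: order_less_imp_le)
  qed
  then show "p \<in> cbox a b" unfolding mem_cbox_coord by blast
qed

lemma cbox_locally_halfspace_at_facet:
  assumes "p \<in> facet_interior a b" "\<forall>k<3. coord k a < coord k b"
  obtains W k H where "open W" "p \<in> W" "k < 3" "W \<inter> cbox a b = W \<inter> H"
    "frontier H = {q. coord k q = coord k p}"
proof -
  obtain k where k: "k < 3" "coord k p = coord k a \<or> coord k p = coord k b"
    and inside: "\<forall>j<3. j \<noteq> k \<longrightarrow> coord j a < coord j p \<and> coord j p < coord j b"
    using assms(1) unfolding facet_interior_def by blast
  define V where "V = (\<Inter>j\<in>{j. j < 3 \<and> j \<noteq> k}. {q. coord j a < coord j q \<and> coord j q < coord j b})"
  have "open V" unfolding V_def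
    by (intro open_INT ballI open_Collect_conj open_Collect_less continuous_on_coord
        continuous_on_const) simp
  have "p \<in> V" unfolding V_def using inside by simp
  have in_V: "q \<in> cbox a b \<longleftrightarrow> coord k a \<le> coord k q \<and> coord k q \<le> coord k b" if "q \<in> V" for q
  proof -
    have "\<forall>j<3. j \<noteq> k \<longrightarrow> coord j a < coord j q \<and> coord j q < coord j b"
      using that unfolding V_def by auto
    then show ?thesis unfolding mem_cbox_coord using k(1) by (metis order_less_imp_le)
  qed
  have nondeg_k: "coord k a < coord k b" using assms(2) k(1) by blast
  from k(2) show ?thesis
  proof
    assume at_lower: "coord k p = coord k a"
    let ?W = "V \<inter> {q. coord k q < coord k b}"
    show ?thesis
    proof (rule that[of ?W k "{q. coord k q \<ge> coord k a}"])
      show "open ?W"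
        using \<open>open V\<close> by (intro open_Int open_Collect_less continuous_on_coord continuous_on_const)
      show "p \<in> ?W" using \<open>p \<in> V\<close> at_lower nondeg_k by simp
      show "?W \<inter> cbox a b = ?W \<inter> {q. coord k q \<ge> coord k a}" using in_V by auto
    qed (simp_all add: k(1) at_lower frontier_coord_halfspaces)
  next
    assume at_upper: "coord k p = coord k b"
    let ?W = "V \<inter> {q. coord k a < coord k q}"
    show ?thesis
    proof (rule that[of ?W k "{q. coord k q \<le> coord k b}"])
      show "open ?W"
        using \<open>open V\<close> by (intro open_Int open_Collect_less continuous_on_coord continuous_on_const)
      show "p \<in> ?W" using \<open>p \<in> V\<close> at_upper nondeg_k by simp
      show "?W \<inter> cbox a b = ?W \<inter> {q. coord k q \<le> coord k b}" using in_V by auto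
    qed (simp_all add: k(1) at_upper frontier_coord_halfspaces)
  qed
qed

lemma flat_point_on_facet:
  assumes "open U" "p \<in> U" "U \<inter> P = U \<inter> cbox a b"
    and "p \<in> facet_interior a b" "\<forall>k<3. coord k a < coord k b"
  shows "p \<in> flat_points P"
proof -
  obtain W k H where W: "open W" "p \<in> W" "k < 3" "W \<inter> cbox a b = W \<inter> H"
    and H: "frontier H = {q. coord k q = coord k p}"
    using cbox_locally_halfspace_at_facet[OF assms(4,5)] by blast
  have "U \<inter> W \<inter> P = W \<inter> (U \<inter> P)" by blast
  also have "\<dots> = U \<inter> (W \<inter> cbox a b)" using assms(3) by blast
  also have "\<dots> = U \<inter> W \<inter> H" using W(4) by blast
  finally show ?thesis
    using assms(1,2) W(1,2) by (intro flat_pointI[OF _ _ W(3) _ H]) auto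
qed

lemma face_containing_flat_set:
  assumes "connected S" "S \<noteq> {}" "S \<subseteq> flat_points P"
  shows "\<exists>F. is_face P F \<and> closure S \<subseteq> F"
proof -
  obtain p where "p \<in> S" using assms(2) by blast
  let ?C = "connected_component_set (flat_points P) p"
  have "?C \<in> components (flat_points P)"
    using \<open>p \<in> S\<close> assms(3) by (auto simp: components_def)
  moreover have "S \<subseteq> ?C"
    using \<open>p \<in> S\<close> assms by (intro connected_component_maximal) auto
  ultimately show ?thesis unfolding is_face_def using closure_mono by blast
qed

lemma guards_mono: "guards P G \<Longrightarrow> G \<subseteq> F \<Longrightarrow> guards P F"
  unfolding guards_def by blast

lemma guards_by_convex_cover:
  assumes "\<And>p. p \<in> P \<Longrightarrow> \<exists>K q. convex K \<and> K \<subseteq> P \<and> p \<in> K \<and> q \<in> K \<and> q \<in> F"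
  shows "guards P F"
  unfolding guards_def visible_def
proof
  fix p assume "p \<in> P"
  then obtain K q where "convex K" "K \<subseteq> P" "p \<in> K" "q \<in> K" "q \<in> F" using assms by blast
  then show "\<exists>q\<in>F. closed_segment q p \<subseteq> P" by (meson closed_segment_subset order_trans)
qed

lemma rset_eq [simp]: "rset (a, b, c, d) = {a..b} \<times> {c..d}"
  by (simp add: rset_def)

lemma rect_subset_bounds:
  fixes a b c d a' b' c' d' :: real
  assumes "{a..b} \<times> {c..d} \<subseteq> {a'..b'} \<times> {c'..d'}" "a \<le> b" "c \<le> d"
  shows "a' \<le> a" "b \<le> b'" "c' \<le> c" "d \<le> d'"
  using assms subsetD[OF assms(1), of "(a, c)"] subsetD[OF assms(1), of "(b, d)"] by auto

lemma frontier_rect: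
  fixes a b c d :: real
  assumes "a < b" "c < d"
  shows "w \<in> frontier ({a..b} \<times> {c..d}) \<longleftrightarrow>
    w \<in> {a..b} \<times> {c..d} \<and> \<not> (a < fst w \<and> fst w < b \<and> c < snd w \<and> snd w < d)"
  using assms by (cases w) (auto simp: frontier_def closure_Times interior_Times)

lemma closure_open_rect_minus:
  fixes a b c d :: real
  assumes "a < b" "c < d" "closed K" "w \<in> {a..b} \<times> {c..d} - K"
  shows "w \<in> closure ({a<..<b} \<times> {c<..<d} - K)"
proof -
  have "w \<in> -K \<inter> closure ({a<..<b} \<times> {c<..<d})"
    using assms by (simp add: closure_Times)
  also have "\<dots> \<subseteq> closure (-K \<inter> {a<..<b} \<times> {c<..<d})"
    using assms(3) by (intro open_Int_closure_subset) auto
  finally show ?thesis by (simp add: Diff_eq Int_commute)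
qed

lemma hole_touches_open_annulus:
  fixes a b c d A B C D :: real
  assumes "a < b" "c < d" "A < B" "C < D" and strict: "{a..b} \<times> {c..d} \<subset> {A..B} \<times> {C..D}"
  shows "\<exists>w \<in> {a..b} \<times> {c..d}. w \<in> closure ({A<..<B} \<times> {C<..<D} - {a..b} \<times> {c..d})"
proof -
  let ?inner = "{a..b} \<times> {c..d}" and ?O = "{A<..<B} \<times> {C<..<D}"
  have bounds: "A \<le> a" "b \<le> B" "C \<le> c" "d \<le> D"
    using rect_subset_bounds[of a b c d A B C D] strict assms(1,2) by auto
  have closed_inner: "closed ?inner" by (intro closed_Times closed_atLeastAtMost)
  have "((a + b) / 2, (c + d) / 2) \<in> ?O \<inter> ?inner" using assms(1,2) bounds by auto
  then have meets: "?O \<inter> ?inner \<noteq> {}" by blast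
  obtain v where "v \<in> {A..B} \<times> {C..D} - ?inner" using strict by blast
  then have "?O - ?inner \<noteq> {}"
    using closure_open_rect_minus[OF assms(3,4) closed_inner] by (metis closure_empty empty_iff)
  then obtain w where w: "w \<in> ?O" "w \<in> frontier ?inner"
    using connected_Int_frontier[of ?O ?inner] meets by (auto simp: convex_connected convex_Times)
  have "w \<in> ?inner" using w(2) closed_inner by (simp add: frontier_def)
  moreover have "w \<in> ?O \<inter> closure (- ?inner)" using w by (simp add: frontier_closures)
  then have "w \<in> closure (?O \<inter> - ?inner)"
    using open_Int_closure_subset[of ?O "- ?inner"] by (auto simp: open_Times)
  ultimately show ?thesis by (auto simp: Diff_eq)
qed

text \<open>If the difference of nested rectangles is connected, the inner one does not cut the outer
  one into two pieces by spanning its full height or its full width (intermediate value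
  theorem).\<close>

lemma connected_rect_minus_rect_not_strip:
  fixes a b c d A B C D :: real
  assumes "a \<le> b" "c \<le> d" "{a..b} \<times> {c..d} \<subseteq> {A..B} \<times> {C..D}"
    and conn: "connected ({A..B} \<times> {C..D} - {a..b} \<times> {c..d})"
  shows "\<not> (A < a \<and> b < B \<and> c \<le> C \<and> D \<le> d)"
    and "\<not> (C < c \<and> d < D \<and> a \<le> A \<and> B \<le> b)"
proof -
  have outer: "A \<le> B" "C \<le> D" using rect_subset_bounds[OF assms(3,1,2)] assms(1,2) by linarith+
  show "\<not> (A < a \<and> b < B \<and> c \<le> C \<and> D \<le> d)"
  proof
    assume strip: "A < a \<and> b < B \<and> c \<le> C \<and> D \<le> d"
    have "(A, C) \<in> {A..B} \<times> {C..D} - {a..b} \<times> {c..d}" "(B, C) \<in> {A..B} \<times> {C..D} - {a..b} \<times> {c..d}"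
      using strip outer by auto
    then obtain z where "z \<in> {A..B} \<times> {C..D} - {a..b} \<times> {c..d}" "z \<bullet> (1, 0) = a"
      using connected_ivt_component[OF conn, of "(A, C)" "(B, C)" "(1, 0)" a] strip assms(1) by auto
    then show False using strip assms(1,2) by (cases z) auto
  qed
  show "\<not> (C < c \<and> d < D \<and> a \<le> A \<and> B \<le> b)"
  proof
    assume strip: "C < c \<and> d < D \<and> a \<le> A \<and> B \<le> b"
    have "(A, C) \<in> {A..B} \<times> {C..D} - {a..b} \<times> {c..d}" "(A, D) \<in> {A..B} \<times> {C..D} - {a..b} \<times> {c..d}"
      using strip outer by auto
    then obtain z where "z \<in> {A..B} \<times> {C..D} - {a..b} \<times> {c..d}" "z \<bullet> (0, 1) = c"
      using connected_ivt_component[OF conn, of "(A, C)" "(A, D)" "(0, 1)" c] strip assms(2) by auto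
    then show False using strip assms(1,2) by (cases z) auto
  qed
qed

lemma connected_Un_if_meets:
  "connected A \<Longrightarrow> connected X \<Longrightarrow> (X \<noteq> {} \<Longrightarrow> A \<inter> X \<noteq> {}) \<Longrightarrow> connected (A \<union> X)"
  by (cases "X = {}") (auto intro: connected_Un)

lemma connected_cross_union:
  assumes conn: "connected L" "connected R" "connected B" "connected T"
    and meet: "\<And>X Y. X \<in> {L, R} \<Longrightarrow> Y \<in> {B, T} \<Longrightarrow> X \<noteq> {} \<Longrightarrow> Y \<noteq> {} \<Longrightarrow> X \<inter> Y \<noteq> {}"
    and no_horizontal_gap: "L \<noteq> {} \<Longrightarrow> R \<noteq> {} \<Longrightarrow> B \<union> T \<noteq> {}"
    and no_vertical_gap: "B \<noteq> {} \<Longrightarrow> T \<noteq> {} \<Longrightarrow> L \<union> R \<noteq> {}"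
  shows "connected (L \<union> R \<union> B \<union> T)"
proof (cases "B \<union> T = {} \<or> L \<union> R = {}")
  case True
  then consider "B = {}" "T = {}" "L = {} \<or> R = {}" | "L = {}" "R = {}" "B = {} \<or> T = {}"
    using no_horizontal_gap no_vertical_gap by blast
  then show ?thesis using conn by cases auto
next
  case False
  then obtain X0 Y0 where X0: "X0 \<in> {L, R}" "X0 \<noteq> {}" and Y0: "Y0 \<in> {B, T}" "Y0 \<noteq> {}" by auto
  have "connected Y0" using Y0(1) conn by auto
  have "connected (Y0 \<union> L)"
    by (rule connected_Un_if_meets) (use \<open>connected Y0\<close> conn(1) meet[of L Y0] Y0 in auto)
  have "connected (Y0 \<union> L \<union> R)"
    by (rule connected_Un_if_meets) (use \<open>connected (Y0 \<union> L)\<close> conn(2) meet[of R Y0] Y0 in auto)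
  have "connected (Y0 \<union> L \<union> R \<union> B)"
    by (rule connected_Un_if_meets) (use \<open>connected (Y0 \<union> L \<union> R)\<close> conn(3) meet[of X0 B] X0 in auto)
  have "connected (Y0 \<union> L \<union> R \<union> B \<union> T)"
    by (rule connected_Un_if_meets) (use \<open>connected (Y0 \<union> L \<union> R \<union> B)\<close> conn(4) meet[of X0 T] X0 in auto)
  moreover have "Y0 \<union> L \<union> R \<union> B \<union> T = L \<union> R \<union> B \<union> T" using Y0 by auto
  ultimately show ?thesis by simp
qed

lemma connected_open_annulus:
  fixes a b c d A B C D :: real
  assumes "a < b" "c < d" and inside: "{a..b} \<times> {c..d} \<subseteq> {A..B} \<times> {C..D}"
    and conn: "connected ({A..B} \<times> {C..D} - {a..b} \<times> {c..d})"
  shows "connected ({A<..<B} \<times> {C<..<D} - {a..b} \<times> {c..d})"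
proof -
  have bounds: "A \<le> a" "b \<le> B" "C \<le> c" "d \<le> D"
    using rect_subset_bounds[OF inside] assms(1,2) by auto
  note no_strip = connected_rect_minus_rect_not_strip[OF _ _ inside conn]
  define L where "L = {A<..<a} \<times> {C<..<D}"
  define R where "R = {b<..<B} \<times> {C<..<D}"
  define Bo where "Bo = {A<..<B} \<times> {C<..<c}"
  define T where "T = {A<..<B} \<times> {d<..<D}"
  have "{A<..<B} \<times> {C<..<D} - {a..b} \<times> {c..d} = L \<union> R \<union> Bo \<union> T"
    unfolding L_def R_def Bo_def T_def using bounds assms(1,2) by auto
  moreover have "connected (L \<union> R \<union> Bo \<union> T)"
  proof (rule connected_cross_union)
    show "connected L" "connected R" "connected Bo" "connected T"
      unfolding L_def R_def Bo_def T_def by (simp_all add: convex_connected convex_Times)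
    show "X \<inter> Y \<noteq> {}" if "X \<in> {L, R}" "Y \<in> {Bo, T}" "X \<noteq> {}" "Y \<noteq> {}" for X Y
      using that bounds assms(1,2) unfolding L_def R_def Bo_def T_def
      by (elim insertE emptyE) (simp_all add: Times_Int_Times)
    show "Bo \<union> T \<noteq> {}" if "L \<noteq> {}" "R \<noteq> {}"
      using that no_strip(1) assms(1,2) bounds unfolding L_def R_def Bo_def T_def by auto
    show "L \<union> R \<noteq> {}" if "Bo \<noteq> {}" "T \<noteq> {}"
      using that no_strip(2) assms(1,2) bounds unfolding L_def R_def Bo_def T_def by auto
  qed
  ultimately show ?thesis by simp
qed

lemma vertical_facet_through_boundary_point:
  fixes a b c d l h :: real
  assumes "a < b" "c < d" "l < h" "(x, y) \<in> frontier ({a..b} \<times> {c..d})"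
  obtains S where "connected S" "S \<noteq> {}" "S \<subseteq> facet_interior (a, c, l) (b, d, h)"
    "S \<subseteq> {q. l < snd (snd q) \<and> snd (snd q) < h}" "(x, y, l) \<in> closure S" "(x, y, h) \<in> closure S"
proof -
  have xy: "a \<le> x" "x \<le> b" "c \<le> y" "y \<le> d" "x = a \<or> x = b \<or> y = c \<or> y = d"
    using assms(4) unfolding frontier_rect[OF assms(1,2)] by auto
  show ?thesis
  proof (cases "x = a \<or> x = b")
    case True
    let ?S = "{x} \<times> {c<..<d} \<times> {l<..<h}"
    show ?thesis
    proof (rule that[of ?S])
      show "?S \<subseteq> facet_interior (a, c, l) (b, d, h)"
        using True by (auto simp: facet_interior_iff)
    qed (use assms xy in \<open>auto simp: convex_connected convex_Times closure_Times\<close>)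
  next
    case False
    then have "y = c \<or> y = d" using xy by blast
    let ?S = "{a<..<b} \<times> {y} \<times> {l<..<h}"
    show ?thesis
    proof (rule that[of ?S])
      show "?S \<subseteq> facet_interior (a, c, l) (b, d, h)"
        using \<open>y = c \<or> y = d\<close> by (auto simp: facet_interior_iff)
    qed (use assms xy in \<open>auto simp: convex_connected convex_Times closure_Times\<close>)
  qed
qed

lemma ctype_le_4: "ctype r s \<le> 4"
proof -
  have "ctype r s \<le> card {0..3::nat}" unfolding ctype_def by (rule card_mono) auto
  then show ?thesis by simp
qed

lemma side_in_rect:
  fixes a b c d :: real
  assumes "a \<le> b" "c \<le> d"
  shows "side (a, b, c, d) i \<noteq> {}" "side (a, b, c, d) i \<subseteq> {a..b} \<times> {c..d}"
  using assms by (auto simp: side_def)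

lemma ctype_not_4_touches_frontier:
  fixes a b c d :: real
  assumes "a \<le> b" "c \<le> d" "ctype (a, b, c, d) s \<noteq> 4"
  shows "\<exists>w \<in> {a..b} \<times> {c..d}. w \<in> frontier (rset s)"
proof -
  let ?free = "{i \<in> {0..3::nat}. \<not> side (a, b, c, d) i \<subseteq> frontier (rset s)}"
  have "?free \<noteq> {0..3}" using assms(3) unfolding ctype_def by auto
  then obtain i where "side (a, b, c, d) i \<subseteq> frontier (rset s)" by blast
  then show ?thesis using side_in_rect[OF assms(1,2), of i] by blast
qed

lemma ctype_strict_pos:
  fixes a b c d A B C D :: real
  assumes "a < b" "c < d" "A < B" "C < D" and strict: "{a..b} \<times> {c..d} \<subset> {A..B} \<times> {C..D}"
  shows "ctype (a, b, c, d) (A, B, C, D) \<noteq> 0"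
proof
  assume "ctype (a, b, c, d) (A, B, C, D) = 0"
  then have on_frontier: "side (a, b, c, d) i \<subseteq> frontier ({A..B} \<times> {C..D})" if "i \<in> {0..3}" for i
    using that unfolding ctype_def by auto
  have bounds: "A \<le> a" "b \<le> B" "C \<le> c" "d \<le> D"
    using rect_subset_bounds[of a b c d A B C D] strict assms(1,2) by auto
  let ?mx = "(a + b) / 2" and ?my = "(c + d) / 2"
  have "(a, ?my) \<in> frontier ({A..B} \<times> {C..D})" "(b, ?my) \<in> frontier ({A..B} \<times> {C..D})"
    "(?mx, c) \<in> frontier ({A..B} \<times> {C..D})" "(?mx, d) \<in> frontier ({A..B} \<times> {C..D})"
    using on_frontier[of 0] on_frontier[of 1] on_frontier[of 2] on_frontier[of 3] assms(1,2)
    by (auto simp: side_def)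
  then have "a = A" "b = B" "c = C" "d = D"
    unfolding frontier_rect[OF assms(3,4)] using assms(1,2) bounds by auto
  then show False using strict by simp
qed

lemma ctype_strict_range:
  assumes "nondeg r" "nondeg s" "rset r \<subset> rset s"
  shows "ctype r s \<in> {1..4}"
proof -
  obtain a b c d A B C D where "r = (a, b, c, d)" "s = (A, B, C, D)" by (metis prod_cases4)
  then show ?thesis
    using ctype_strict_pos[of a b c d A B C D] ctype_le_4[of r s] assms by (auto simp: nondeg_def)
qed

text \<open>What the hypotheses on a three-brick stack mean for its footprints: canonical contacts give
  four inclusion patterns, and the excluded signatures rule out an extreme rectangle of
  type 4 in the two monotone patterns.\<close>

lemma canonical_signature_cases:
  assumes nd: "nondeg r1" "nondeg r2" "nondeg r3" and can: "canonical r1 r2" "canonical r2 r3"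
    and sig1: "\<not> (\<exists>i \<in> {1..4}. [contact_sym r1 r2, contact_sym r2 r3] = [Cap i, Cap 4])"
    and sig2: "\<not> (\<exists>i \<in> {1..4}. [contact_sym r1 r2, contact_sym r2 r3] = [Cup 4, Cup i])"
  obtains (increasing) "rset r1 \<subset> rset r2" "rset r2 \<subset> rset r3" "ctype r1 r2 \<noteq> 4"
    | (middle_largest) "rset r1 \<subset> rset r2" "rset r3 \<subset> rset r2"
        "connected (rset r2 - rset r1)" "connected (rset r2 - rset r3)"
    | (middle_smallest) "rset r2 \<subset> rset r1" "rset r2 \<subset> rset r3"
    | (decreasing) "rset r2 \<subset> rset r1" "rset r3 \<subset> rset r2" "ctype r3 r2 \<noteq> 4"
proof -
  have "rset r1 \<subset> rset r2 \<and> connected (rset r2 - rset r1) \<or> rset r2 \<subset> rset r1"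
    and "rset r2 \<subset> rset r3 \<or> rset r3 \<subset> rset r2 \<and> connected (rset r2 - rset r3)"
    using can unfolding canonical_def by blast+
  then consider "rset r1 \<subset> rset r2" "rset r2 \<subset> rset r3"
    | "rset r1 \<subset> rset r2" "rset r3 \<subset> rset r2"
      "connected (rset r2 - rset r1)" "connected (rset r2 - rset r3)"
    | "rset r2 \<subset> rset r1" "rset r2 \<subset> rset r3" | "rset r2 \<subset> rset r1" "rset r3 \<subset> rset r2"
    by meson
  then show ?thesis
  proof cases
    case 1
    moreover have "ctype r2 r3 \<in> {1..4}" using ctype_strict_range[OF nd(2,3) 1(2)] .
    ultimately have "ctype r1 r2 \<noteq> 4" using sig2 by (auto simp: contact_sym_def)
    then show ?thesis using 1 increasing by blast
  next
    case 4
    moreover have "ctype r2 r1 \<in> {1..4}" using ctype_strict_range[OF nd(2,1) 4(1)] .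
    moreover have "\<not> rset r1 \<subset> rset r2" "\<not> rset r2 \<subset> rset r3" using 4 by auto
    ultimately have "ctype r3 r2 \<noteq> 4" using sig1 by (auto simp: contact_sym_def)
    then show ?thesis using 4 decreasing by blast
  qed (use middle_largest middle_smallest in blast)+
qed

locale three_brick_stack =
  fixes a1 b1 c1 d1 a2 b2 c2 d2 a3 b3 c3 d3 z0 z1 z2 z3 :: real and P :: "point3 set"
  assumes nondeg: "a1 < b1" "c1 < d1" "a2 < b2" "c2 < d2" "a3 < b3" "c3 < d3"
    and heights: "z0 < z1" "z1 < z2" "z2 < z3"
    and P_def: "P = cbox (a1, c1, z0) (b1, d1, z1) \<union> cbox (a2, c2, z1) (b2, d2, z2) \<union>
                    cbox (a3, c3, z2) (b3, d3, z3)"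
begin

abbreviation R1 :: "(real \<times> real) set" where "R1 \<equiv> {a1..b1} \<times> {c1..d1}"
abbreviation R2 :: "(real \<times> real) set" where "R2 \<equiv> {a2..b2} \<times> {c2..d2}"
abbreviation R3 :: "(real \<times> real) set" where "R3 \<equiv> {a3..b3} \<times> {c3..d3}"
abbreviation B1 :: "point3 set" where "B1 \<equiv> cbox (a1, c1, z0) (b1, d1, z1)"
abbreviation B2 :: "point3 set" where "B2 \<equiv> cbox (a2, c2, z1) (b2, d2, z2)"
abbreviation B3 :: "point3 set" where "B3 \<equiv> cbox (a3, c3, z2) (b3, d3, z3)"

abbreviation guarded_by_inner_face :: bool where
  "guarded_by_inner_face \<equiv> \<exists>F. is_face P F \<and> F \<noteq> cbox (a3, c3, z3) (b3, d3, z3) \<and>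
     F \<noteq> cbox (a1, c1, z0) (b1, d1, z0) \<and> guards P F"

lemma guarded_by_facet_of_middle_brick:
  assumes "connected S" "S \<noteq> {}" "S \<subseteq> facet_interior (a2, c2, z1) (b2, d2, z2)"
    and "S \<inter> (B1 \<union> B3) = {}" and "guards P (closure S)"
  shows guarded_by_inner_face
proof -
  have nondeg2: "\<forall>k<3. coord k (a2, c2, z1) < coord k (b2, d2, z2)"
    using nondeg heights by (simp add: all_less_3 coord_def)
  have "S \<subseteq> flat_points P"
  proof
    fix p assume "p \<in> S"
    let ?U = "- (B1 \<union> B3)"
    have "open ?U" by (intro open_Compl closed_Un closed_cbox)
    moreover have "p \<in> ?U" using assms(4) \<open>p \<in> S\<close> by blast
    moreover have "?U \<inter> P = ?U \<inter> B2" using P_def by blast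
    ultimately show "p \<in> flat_points P"
      using flat_point_on_facet nondeg2 assms(3) \<open>p \<in> S\<close> by blast
  qed
  then obtain F where F: "is_face P F" "closure S \<subseteq> F"
    using face_containing_flat_set assms(1,2) by blast
  obtain p where "p \<in> S" using assms(2) by blast
  then have "p \<in> B2" using assms(3) facet_interior_subset_cbox[OF nondeg2] by blast
  then have "p \<notin> cbox (a3, c3, z3) (b3, d3, z3)" "p \<notin> cbox (a1, c1, z0) (b1, d1, z0)"
    using heights by (cases p; auto)+
  moreover have "p \<in> F" using \<open>p \<in> S\<close> F(2) closure_subset by blast
  ultimately show ?thesis using F guards_mono[OF assms(5) F(2)] by blast
qed

text \<open>A vertical facet of the middle brick guards P if it passes through a point of both other
  footprints: that point at height z1 sees the two lower bricks, at height z2 the upper one.\<close>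

lemma guarded_by_vertical_face:
  assumes "w \<in> R1" "w \<in> R3" "w \<in> frontier R2"
  shows guarded_by_inner_face
proof -
  obtain x y where w: "w = (x, y)" by (cases w)
  obtain S where S: "connected S" "S \<noteq> {}" "S \<subseteq> facet_interior (a2, c2, z1) (b2, d2, z2)"
    "S \<subseteq> {q. z1 < snd (snd q) \<and> snd (snd q) < z2}" "(x, y, z1) \<in> closure S" "(x, y, z2) \<in> closure S"
    by (rule vertical_facet_through_boundary_point[OF nondeg(3,4) heights(2) assms(3)[unfolded w]])
  have "snd (snd q) \<le> z1 \<or> z2 \<le> snd (snd q)" if "q \<in> B1 \<union> B3" for q
    using that heights by (cases q) auto
  then have "S \<inter> (B1 \<union> B3) = {}" using S(4) by fastforce
  moreover have "guards P (closure S)"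
  proof (rule guards_by_convex_cover)
    have "w \<in> R2" using assms(3) frontier_rect[OF nondeg(3,4)] by blast
    fix p assume "p \<in> P"
    then consider "p \<in> B1" | "p \<in> B2" | "p \<in> B3" using P_def by blast
    then show "\<exists>K q. convex K \<and> K \<subseteq> P \<and> p \<in> K \<and> q \<in> K \<and> q \<in> closure S"
    proof cases
      case 1
      have "(x, y, z1) \<in> B1" using assms(1) w heights by auto
      then show ?thesis
        using 1 S(5) by (intro exI[of _ B1] exI[of _ "(x, y, z1)"]) (auto simp: P_def)
    next
      case 2
      have "(x, y, z1) \<in> B2" using \<open>w \<in> R2\<close> w heights by auto
      then show ?thesis
        using 2 S(5) by (intro exI[of _ B2] exI[of _ "(x, y, z1)"]) (auto simp: P_def)
    next
      case 3
      have "(x, y, z2) \<in> B3" using assms(2) w heights by auto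
      then show ?thesis
        using 3 S(6) by (intro exI[of _ B3] exI[of _ "(x, y, z2)"]) (auto simp: P_def)
    qed
  qed
  ultimately show ?thesis using guarded_by_facet_of_middle_brick S(1-3) by blast
qed

lemma guarded_by_horizontal_face:
  assumes "connected D" "D \<subseteq> {a2<..<b2} \<times> {c2<..<d2}"
    and level: "h = z1 \<and> D \<inter> R1 = {} \<or> h = z2 \<and> D \<inter> R3 = {}"
    and "R1 \<subseteq> R2" "R3 \<subseteq> R2"
    and w1: "w1 \<in> R1" "w1 \<in> closure D" and w3: "w3 \<in> R3" "w3 \<in> closure D"
  shows guarded_by_inner_face
proof -
  define lift where "lift = (\<lambda>w :: real \<times> real. (fst w, snd w, h))"
  define S where "S = lift ` D"
  have cont: "continuous_on A lift" for A unfolding lift_def by (intro continuous_intros)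
  have "connected S" unfolding S_def by (rule connected_continuous_image[OF cont assms(1)])
  moreover have "S \<noteq> {}" using w1(2) unfolding S_def by auto
  moreover have "S \<subseteq> facet_interior (a2, c2, z1) (b2, d2, z2)"
    using assms(2) level heights unfolding S_def lift_def by (auto simp: facet_interior_iff)
  moreover have "S \<inter> (B1 \<union> B3) = {}"
    using level heights unfolding S_def lift_def by force
  moreover have "guards P (closure S)"
  proof (rule guards_by_convex_cover)
    have h: "z1 \<le> h" "h \<le> z2" using level heights by auto
    have lifted: "lift w1 \<in> closure S" "lift w3 \<in> closure S"
      using continuous_image_closure_subset[OF cont[of UNIV], of D] w1(2) w3(2) unfolding S_def by auto
    fix p assume "p \<in> P"
    then consider "p \<in> B1" | "p \<in> B2" | "p \<in> B3" using P_def by blast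
    then show "\<exists>K q. convex K \<and> K \<subseteq> P \<and> p \<in> K \<and> q \<in> K \<and> q \<in> closure S"
    proof cases
      case 1
      let ?K = "cbox (a1, c1, z0) (b1, d1, h)"
      have "?K \<subseteq> P" using assms(4) h unfolding P_def by (force simp: cbox_Pair_eq)
      moreover have "p \<in> ?K" using 1 h by (cases p) auto
      ultimately show ?thesis using h heights w1(1) lifted(1)
        by (intro exI[of _ ?K] exI[of _ "lift w1"]) (auto simp: lift_def)
    next
      case 2
      then show ?thesis using h w1(1) assms(4) lifted(1)
        by (intro exI[of _ B2] exI[of _ "lift w1"]) (auto simp: lift_def P_def)
    next
      case 3
      let ?K = "cbox (a3, c3, h) (b3, d3, z3)"
      have "?K \<subseteq> P" using assms(5) h unfolding P_def by (force simp: cbox_Pair_eq)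
      moreover have "p \<in> ?K" using 3 h by (cases p) auto
      ultimately show ?thesis using h heights w3(1) lifted(2)
        by (intro exI[of _ ?K] exI[of _ "lift w3"]) (auto simp: lift_def)
    qed
  qed
  ultimately show ?thesis by (rule guarded_by_facet_of_middle_brick)
qed

text \<open>Signature of the form cup-cap: the middle brick is the largest one; use the annulus below
  it, or the one above it if R3 lies inside R1.\<close>

lemma guarded_if_middle_largest:
  assumes "R1 \<subset> R2" "R3 \<subset> R2" "connected (R2 - R1)" "connected (R2 - R3)"
  shows guarded_by_inner_face
proof (cases "R3 \<subseteq> R1")
  case True
  let ?D = "{a2<..<b2} \<times> {c2<..<d2} - R3"
  obtain w where "w \<in> R3" "w \<in> closure ?D"
    using hole_touches_open_annulus[OF nondeg(5,6,3,4) assms(2)] by blast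
  moreover have "connected ?D"
    using connected_open_annulus[OF nondeg(5,6) _ assms(4)] assms(2) by blast
  ultimately show ?thesis
    using guarded_by_horizontal_face[of ?D z2 w w] True assms(1,2) by blast
next
  case False
  let ?D = "{a2<..<b2} \<times> {c2<..<d2} - R1"
  obtain w1 where "w1 \<in> R1" "w1 \<in> closure ?D"
    using hole_touches_open_annulus[OF nondeg(1,2,3,4) assms(1)] by blast
  moreover obtain w3 where "w3 \<in> R3" "w3 \<in> closure ?D"
  proof -
    obtain w3 where "w3 \<in> R3" "w3 \<notin> R1" using False by blast
    moreover have "closed R1" by (intro closed_Times closed_atLeastAtMost)
    ultimately show ?thesis using that closure_open_rect_minus[OF nondeg(3,4)] assms(2) by blast
  qed
  moreover have "connected ?D"
    using connected_open_annulus[OF nondeg(1,2) _ assms(3)] assms(1) by blast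
  ultimately show ?thesis
    using guarded_by_horizontal_face[of ?D z1 w1 w3] assms(1,2) by blast
qed

text \<open>Signature of the form cap-cup: the middle brick is the smallest one; any vertical facet of
  it works.\<close>

lemma guarded_if_middle_smallest:
  assumes "R2 \<subseteq> R1" "R2 \<subseteq> R3"
  shows guarded_by_inner_face
proof (rule guarded_by_vertical_face)
  show "(a2, c2) \<in> frontier R2" using nondeg(3,4) by (simp add: frontier_rect)
  have "(a2, c2) \<in> R2" using nondeg(3,4) by auto
  then show "(a2, c2) \<in> R1" "(a2, c2) \<in> R3" using assms by blast+
qed

text \<open>Increasing and decreasing stacks: the excluded signatures are exactly those where the
  extreme rectangle has type 4, i.e. does not reach the boundary of R2.\<close>

lemma guarded_if_increasing:
  assumes "R1 \<subseteq> R2" "R2 \<subseteq> R3" "ctype (a1, b1, c1, d1) (a2, b2, c2, d2) \<noteq> 4"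
  shows guarded_by_inner_face
proof -
  obtain w where "w \<in> R1" "w \<in> frontier R2"
    using ctype_not_4_touches_frontier[OF _ _ assms(3)] nondeg(1,2) by auto
  moreover have "w \<in> R3" using \<open>w \<in> frontier R2\<close> frontier_rect[OF nondeg(3,4)] assms(2) by blast
  ultimately show ?thesis using guarded_by_vertical_face by blast
qed

lemma guarded_if_decreasing:
  assumes "R3 \<subseteq> R2" "R2 \<subseteq> R1" "ctype (a3, b3, c3, d3) (a2, b2, c2, d2) \<noteq> 4"
  shows guarded_by_inner_face
proof -
  obtain w where "w \<in> R3" "w \<in> frontier R2"
    using ctype_not_4_touches_frontier[OF _ _ assms(3)] nondeg(5,6) by auto
  moreover have "w \<in> R1" using \<open>w \<in> frontier R2\<close> frontier_rect[OF nondeg(3,4)] assms(2) by blast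
  ultimately show ?thesis using guarded_by_vertical_face by blast
qed

end

theorem mainTheorem10:
  fixes R :: "nat \<Rightarrow> rectc" and z :: "nat \<Rightarrow> real" and P :: "point3 set"
  assumes nd: "\<forall>t \<in> {1,2,3}. nondeg (R t)"
    and zs: "z 0 < z 1" "z 1 < z 2" "z 2 < z 3"
    and P: "P = brick (R 1) (z 0) (z 1) \<union> brick (R 2) (z 1) (z 2) \<union> brick (R 3) (z 2) (z 3)"
    and can: "canonical (R 1) (R 2)" "canonical (R 2) (R 3)"
    and sig1: "\<not> (\<exists>i \<in> {1..4}. [contact_sym (R 1) (R 2), contact_sym (R 2) (R 3)] = [Cap i, Cap 4])"
    and sig2: "\<not> (\<exists>i \<in> {1..4}. [contact_sym (R 1) (R 2), contact_sym (R 2) (R 3)] = [Cup 4, Cup i])"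
  shows "\<exists>F. is_face P F \<and> F \<noteq> brick (R 3) (z 3) (z 3) \<and> F \<noteq> brick (R 1) (z 0) (z 0) \<and> guards P F"
proof -
  obtain a1 b1 c1 d1 a2 b2 c2 d2 a3 b3 c3 d3 where
    R: "R 1 = (a1, b1, c1, d1)" "R 2 = (a2, b2, c2, d2)" "R 3 = (a3, b3, c3, d3)"
    by (metis prod_cases4)
  interpret three_brick_stack a1 b1 c1 d1 a2 b2 c2 d2 a3 b3 c3 d3 "z 0" "z 1" "z 2" "z 3" P
    using nd zs P R by unfold_locales (auto simp: nondeg_def brick_cbox)
  have nondeg_R: "nondeg (R 1)" "nondeg (R 2)" "nondeg (R 3)" using nd by auto
  have guarded_by_inner_face
    using nondeg_R can sig1 sig2
  proof (cases rule: canonical_signature_cases)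
    case increasing
    then show ?thesis using R guarded_if_increasing by simp
  next
    case middle_largest
    then show ?thesis using R guarded_if_middle_largest by simp
  next
    case middle_smallest
    then show ?thesis using R guarded_if_middle_smallest by auto
  next
    case decreasing
    then show ?thesis using R guarded_if_decreasing by simp
  qed
  then show ?thesis using R by (simp add: brick_cbox)
qed

end
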